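(* For every $h>1/3$ and $q>1/2$ there is an instance with two groups of additive agents in which no allocation is $h$-democratic $q$-fraction-MMS-fair.
   Context: There is a finite set $G$ of goods and two groups $A_1,A_2$ with $n_i\ge1$ agents in $A_i$. Each agent has an additive utility $u_a:2^G\to\mathbb{R}_{\ge0}$. An allocation is a partition $(G_1,G_2)$ of $G$; agents of $A_i$ get $u_a(G_i)$. $\mathrm{MMS}^2_a(G)=\max\min(u_a(P_1),u_a(P_2))$ over partitions $(P_1,P_2)$ of $G$. The allocation is $q$-fraction-MMS-fair for $a\in A_i$ if $u_a(G_i)\ge q\,\mathrm{MMS}^2_a(G)$. An allocation is $h$-democratic fair if for each $i$ at least $h\cdot n_i$ agents of $A_i$ find it fair. *)

theory Defs
  imports Main "HOL-Library.FuncSet" Complex_Main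
begin

definition util :: "('g \<Rightarrow> real) \<Rightarrow> 'g set \<Rightarrow> real" where
  "util v S = (\<Sum>g\<in>S. v g)"

definition MMS2 :: "('g \<Rightarrow> real) \<Rightarrow> 'g set \<Rightarrow> real" where
  "MMS2 v G = Max ((\<lambda>P. min (util v P) (util v (G - P))) ` Pow G)"

definition q_MMS_fair :: "real \<Rightarrow> ('g \<Rightarrow> real) \<Rightarrow> 'g set \<Rightarrow> 'g set \<Rightarrow> bool" where
  "q_MMS_fair q v G B \<longleftrightarrow> util v B \<ge> q * MMS2 v G"

definition group_bundle :: "'g set \<Rightarrow> 'g set \<Rightarrow> nat \<Rightarrow> 'g set" where
  "group_bundle G G1 i = (if i = 1 then G1 else G - G1)"

definition democratic_fair ::
  "real \<Rightarrow> real \<Rightarrow> 'g set \<Rightarrow> (nat \<Rightarrow> nat) \<Rightarrow> (nat \<Rightarrow> nat \<Rightarrow> 'g \<Rightarrow> real) \<Rightarrow> 'g set \<Rightarrow> bool" where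
  "democratic_fair h q G n val G1 \<longleftrightarrow>
     (\<forall>i\<in>{1,2::nat}.
        real (card {a. a < n i \<and> q_MMS_fair q (val i a) G (group_bundle G G1 i)}) \<ge> h * real (n i))"

end

theory Submission
  imports Defs
begin

text \<open>Take three goods and, in each group, three agents; agent a values good a at 2 and the
other two goods at 1. Every agent has maximin share 2 (its own good against the other two), so
for q > 1/2 an agent is satisfied only by a bundle worth at least 2, i.e. one with at least two
goods or consisting of its own good alone. In any partition one of the two bundles has at most
one good, and such a bundle satisfies at most the one agent owning that good. Hence some group
has at most one satisfied agent out of three, fewer than h \<cdot> 3 for h > 1/3.\<close>

definition own_good_valuation :: "nat \<Rightarrow> nat \<Rightarrow> real" where
  "own_good_valuation a g = (if g = a then 2 else 1)"

lemma util_own_good_valuation: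
  assumes "finite S"
  shows "util (own_good_valuation a) S = real (card S) + (if a \<in> S then 1 else 0)"
proof -
  have "util (own_good_valuation a) S = (\<Sum>g\<in>S. 1 + (if g = a then 1 else 0))"
    unfolding util_def own_good_valuation_def by (intro sum.cong) auto
  also have "\<dots> = real (card S) + (if a \<in> S then 1 else 0)"
    using assms by (simp add: sum.distrib)
  finally show ?thesis .
qed

lemma MMS2_own_good_valuation:
  assumes "a \<in> {0, 1, 2}"
  shows "2 \<le> MMS2 (own_good_valuation a) {0, 1, 2}"
proof -
  let ?v = "own_good_valuation a"
  have "card ({0, 1, 2 :: nat} - {a}) = 2" using assms by auto
  then have "min (util ?v {a}) (util ?v ({0, 1, 2} - {a})) = 2"
    by (simp add: util_own_good_valuation)
  moreover have "min (util ?v {a}) (util ?v ({0, 1, 2} - {a})) \<le> MMS2 ?v {0, 1, 2}"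
    unfolding MMS2_def using assms by (intro Max_ge) auto
  ultimately show ?thesis by simp
qed

lemma q_MMS_fair_own_good_valuation:
  assumes "q > 1/2" and "a \<in> {0, 1, 2}"
    and "q_MMS_fair q (own_good_valuation a) {0, 1, 2} B"
  shows "1 < util (own_good_valuation a) B"
proof -
  have "q * 2 \<le> q * MMS2 (own_good_valuation a) {0, 1, 2}"
    using MMS2_own_good_valuation[OF assms(2)] assms(1) by (intro mult_left_mono) auto
  then show ?thesis using assms unfolding q_MMS_fair_def by linarith
qed

lemma own_good_mem_if_small_bundle_valuable:
  assumes "card S \<le> 1" and "1 < util (own_good_valuation a) S"
  shows "a \<in> S"
proof (cases "finite S")
  case True
  then show ?thesis using assms by (auto simp: util_own_good_valuation split: if_splits)
next
  case False
  then show ?thesis using assms by (simp add: util_def)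
qed

lemma few_agents_value_some_bundle:
  assumes "finite G" and "card G \<le> 3" and "S \<subseteq> G"
  shows "card {a \<in> A. 1 < util (own_good_valuation a) S} \<le> 1 \<or>
         card {a \<in> A. 1 < util (own_good_valuation a) (G - S)} \<le> 1"
proof -
  have small_bundle: "card {a \<in> A. 1 < util (own_good_valuation a) T} \<le> 1"
    if "T \<subseteq> G" and "card T \<le> 1" for T
  proof -
    have "{a \<in> A. 1 < util (own_good_valuation a) T} \<subseteq> T"
      using own_good_mem_if_small_bundle_valuable[OF \<open>card T \<le> 1\<close>] by blast
    then have "card {a \<in> A. 1 < util (own_good_valuation a) T} \<le> card T"
      using finite_subset[OF \<open>T \<subseteq> G\<close> assms(1)] by (rule card_mono[rotated])
    with \<open>card T \<le> 1\<close> show ?thesis by linarith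
  qed
  have "finite S" using assms(1,3) by (rule finite_subset[rotated])
  then have "card (G - S) = card G - card S" and "card S \<le> card G"
    using assms(1,3) by (simp_all add: card_Diff_subset card_mono)
  then have "card S \<le> 1 \<or> card (G - S) \<le> 1" using assms(2) by linarith
  then show ?thesis using small_bundle assms(3) by blast
qed

theorem mainTheorem11:
  fixes h q :: real
  assumes "h > 1/3" and "q > 1/2"
  shows "\<exists>(G :: nat set) (n :: nat \<Rightarrow> nat) (val :: nat \<Rightarrow> nat \<Rightarrow> nat \<Rightarrow> real).
           finite G \<and> n 1 \<ge> 1 \<and> n 2 \<ge> 1 \<and>
           (\<forall>i a g. val i a g \<ge> 0) \<and>
           (\<forall>G1. G1 \<subseteq> G \<longrightarrow> \<not> democratic_fair h q G n val G1)"
proof (intro exI conjI allI impI)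
  let ?G = "{0, 1, 2 :: nat}"
  show "finite ?G" by simp
  show "(1::nat) \<le> (\<lambda>_. 3) 1" "(1::nat) \<le> (\<lambda>_. 3) 2" by auto
  show "\<And>i a g. 0 \<le> (\<lambda>_::nat. own_good_valuation) i a g" by (simp add: own_good_valuation_def)
  fix G1 assume "G1 \<subseteq> ?G"
  let ?satisfied = "\<lambda>i. {a. a < 3 \<and> q_MMS_fair q (own_good_valuation a) ?G (group_bundle ?G G1 i)}"
  let ?valuing = "\<lambda>i. {a \<in> ?G. 1 < util (own_good_valuation a) (group_bundle ?G G1 i)}"
  have "?satisfied i \<subseteq> ?valuing i" for i
  proof
    fix a assume "a \<in> ?satisfied i"
    then have "a \<in> ?G" by auto
    with \<open>a \<in> ?satisfied i\<close> show "a \<in> ?valuing i"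
      using q_MMS_fair_own_good_valuation[OF assms(2)] by auto
  qed
  then have "card (?satisfied i) \<le> card (?valuing i)" for i
    by (intro card_mono) auto
  moreover have "card (?valuing 1) \<le> 1 \<or> card (?valuing 2) \<le> 1"
    using few_agents_value_some_bundle[of ?G G1 ?G] \<open>G1 \<subseteq> ?G\<close>
    by (simp add: group_bundle_def)
  ultimately have "card (?satisfied 1) \<le> 1 \<or> card (?satisfied 2) \<le> 1"
    by (meson le_trans)
  then have "real (card (?satisfied 1)) < h * 3 \<or> real (card (?satisfied 2)) < h * 3"
    using assms(1) by auto
  then show "\<not> democratic_fair h q ?G (\<lambda>_. 3) (\<lambda>_. own_good_valuation) G1"
    unfolding democratic_fair_def by force
qed

end
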